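(* If $(A_m)_{m=0}^\infty$ is an Appell sequence, then the expected value of the Wronskian Appell polynomials over partitions of $n$ with respect to Plancherel measure is \[ \mathbb{E}(A_\lambda:\lambda\vdash n)=\sum_{\lambda\vdash n}\frac{F_\lambda^2}{n!}A_\lambda = A_1^n. \]
   Context: An Appell sequence is a sequence of polynomials $(A_m)_{m\ge0}$ with $A_0=1$ and $A_m'=mA_{m-1}$ for $m\ge1$. For a partition $\lambda$ of length $r$, let $(n_1,\dots,n_r)=(\lambda_r,\lambda_{r-1}+1,\dots,\lambda_1+r-1)$ and $A_\lambda=\operatorname{Wr}[A_{n_1},\dots,A_{n_r}]/\Delta(n_1,\dots,n_r)$, where $\operatorname{Wr}$ is the Wronskian and $\Delta$ the Vandermonde determinant $\prod_{i<j}(x_j-x_i)$. $F_\lambda$ is the number of standard Young tableaux of shape $\lambda$, and Plancherel measure on partitions of $n$ assigns probability $F_\lambda^2/n!$ to $\lambda\vdash n$. *)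

theory Defs
  imports "HOL-Computational_Algebra.Polynomial" "Jordan_Normal_Form.Determinant"
begin

definition appell :: "(nat \<Rightarrow> 'a::field_char_0 poly) \<Rightarrow> bool" where
  "appell A \<longleftrightarrow> A 0 = 1 \<and> (\<forall>m\<ge>1. pderiv (A m) = smult (of_nat m) (A (m - 1)))"

definition is_partition :: "nat list \<Rightarrow> bool" where
  "is_partition lam \<longleftrightarrow> sorted_wrt (\<ge>) lam \<and> (\<forall>x\<in>set lam. 0 < x)"

definition partitions :: "nat \<Rightarrow> nat list set" where
  "partitions n = {lam. is_partition lam \<and> sum_list lam = n}"

definition young_cells :: "nat list \<Rightarrow> (nat \<times> nat) set" where
  "young_cells lam = {(i, j). i < length lam \<and> j < lam ! i}"

definition syt :: "nat list \<Rightarrow> (nat \<times> nat \<Rightarrow> nat) set" where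
  "syt lam = {T. bij_betw T (young_cells lam) {1..sum_list lam}
      \<and> (\<forall>i j i' j'. (i, j) \<in> young_cells lam \<and> (i', j') \<in> young_cells lam
            \<and> i \<le> i' \<and> j \<le> j' \<longrightarrow> T (i, j) \<le> T (i', j'))
      \<and> (\<forall>c. c \<notin> young_cells lam \<longrightarrow> T c = 0)}"

definition num_syt :: "nat list \<Rightarrow> nat" where
  "num_syt lam = card (syt lam)"

definition degree_seq :: "nat list \<Rightarrow> nat list" where
  "degree_seq lam = map (\<lambda>i. lam ! (length lam - 1 - i) + i) [0..<length lam]"

definition wronskian :: "'a::field_char_0 poly list \<Rightarrow> 'a poly" where
  "wronskian fs = det (mat (length fs) (length fs) (\<lambda>(i, j). (pderiv ^^ i) (fs ! j)))"

definition vandermonde :: "nat list \<Rightarrow> int" where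
  "vandermonde xs = (\<Prod>(i, j)\<in>{(i, j). i < j \<and> j < length xs}. int (xs ! j) - int (xs ! i))"

definition wronskian_appell :: "(nat \<Rightarrow> 'a::field_char_0 poly) \<Rightarrow> nat list \<Rightarrow> 'a poly" where
  "wronskian_appell A lam =
     smult (inverse (of_int (vandermonde (degree_seq lam))))
           (wronskian (map A (degree_seq lam)))"

end

theory Submission
  imports Defs
begin

text \<open>Put \<open>B\<^sub>k = A\<^sub>k / k!\<close>. The Appell property says \<open>B\<^sub>k' = B\<^sub>k\<^sub>-\<^sub>1\<close>, so the \<open>j\<close>-th derivative of \<open>A\<^sub>m\<close>
  is \<open>m! B\<^sub>m\<^sub>-\<^sub>j\<close> and the Wronskian of \<open>A\<^sub>n\<^sub>1, \<dots>, A\<^sub>n\<^sub>r\<close> is \<open>\<Prod>\<^sub>i n\<^sub>i!\<close> times the Jacobi--Trudi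
  determinant \<open>det (B (\<lambda>\<^sub>i - i + j))\<close>, i.e. the Schur function \<open>s\<^sub>\<lambda>\<close> evaluated at the complete
  symmetric functions \<open>h\<^sub>k = B\<^sub>k\<close>. Frobenius' formula \<open>F\<^sub>\<lambda> = n! \<Delta>(n\<^sub>1, \<dots>, n\<^sub>r) / \<Prod>\<^sub>i n\<^sub>i!\<close> turns the
  Plancherel average into \<open>\<Sum>\<^sub>\<lambda> F\<^sub>\<lambda> s\<^sub>\<lambda>(h)\<close>.

  For every sequence \<open>h\<close> with \<open>h\<^sub>0 = 1\<close> this sum is \<open>h\<^sub>1\<^sup>n\<close>: multiplying by \<open>h\<^sub>1\<close> and applying the
  Pieri rule \<open>h\<^sub>1 s\<^sub>\<mu> = \<Sum> s\<^sub>\<mu>\<^sub>+\<^sub>\<box>\<close> adds a box to \<open>\<mu>\<close> in all possible ways, and the branching rule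
  \<open>F\<^sub>\<lambda> = \<Sum> F\<^sub>\<lambda>\<^sub>-\<^sub>\<box>\<close> regroups the terms. Frobenius' formula itself comes from evaluating the
  Jacobi--Trudi determinant at \<open>h\<^sub>k = 1/k!\<close>: it is a Vandermonde determinant of falling
  factorials, and it satisfies the same branching recursion as \<open>F\<^sub>\<lambda>/n!\<close>.\<close>

section \<open>Leibniz expansions\<close>

lemma det_mat_Leibniz:
  "det (mat n n f) = (\<Sum>p\<in>{p. p permutes {0..<n}}. signof p * (\<Prod>i=0..<n. f (i, p i)))"
  by (subst det_def'[of _ n]) (auto intro!: sum.cong prod.cong dest: permutes_in_image)

lemma sum_det_replace_row_Leibniz:
  "(\<Sum>t=0..<n. det (mat n n (\<lambda>(i,j). if i = t then g (i,j) else f (i,j))))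
   = (\<Sum>p\<in>{p. p permutes {0..<n}}. signof p *
        (\<Sum>t=0..<n. \<Prod>i=0..<n. if i = t then g (i, p i) else f (i, p i)))"
proof -
  have "(\<Sum>t=0..<n. det (mat n n (\<lambda>(i,j). if i = t then g (i,j) else f (i,j))))
     = (\<Sum>t=0..<n. \<Sum>p\<in>{p. p permutes {0..<n}}. signof p * (\<Prod>i=0..<n. if i = t then g (i, p i) else f (i, p i)))"
    by (simp add: det_mat_Leibniz)
  also have "\<dots> = (\<Sum>p\<in>{p. p permutes {0..<n}}. \<Sum>t=0..<n. signof p * (\<Prod>i=0..<n. if i = t then g (i, p i) else f (i, p i)))"
    by (rule sum.swap)
  also have "\<dots> = (\<Sum>p\<in>{p. p permutes {0..<n}}. signof p *
        (\<Sum>t=0..<n. \<Prod>i=0..<n. if i = t then g (i, p i) else f (i, p i)))"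
    by (simp add: sum_distrib_left)
  finally show ?thesis .
qed

lemma sum_det_replace_col_Leibniz:
  "(\<Sum>t=0..<n. det (mat n n (\<lambda>(i,j). if j = t then g (i,j) else f (i,j))))
   = (\<Sum>p\<in>{p. p permutes {0..<n}}. signof p *
        (\<Sum>t=0..<n. \<Prod>i=0..<n. if i = t then g (i, p i) else f (i, p i)))"
proof -
  have "(\<Sum>t=0..<n. det (mat n n (\<lambda>(i,j). if j = t then g (i,j) else f (i,j))))
     = (\<Sum>t=0..<n. \<Sum>p\<in>{p. p permutes {0..<n}}. signof p * (\<Prod>i=0..<n. if p i = t then g (i, p i) else f (i, p i)))"
    by (simp add: det_mat_Leibniz)
  also have "\<dots> = (\<Sum>p\<in>{p. p permutes {0..<n}}. \<Sum>t=0..<n. signof p * (\<Prod>i=0..<n. if p i = t then g (i, p i) else f (i, p i)))"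
    by (rule sum.swap)
  also have "\<dots> = (\<Sum>p\<in>{p. p permutes {0..<n}}. signof p *
        (\<Sum>t=0..<n. \<Prod>i=0..<n. if i = t then g (i, p i) else f (i, p i)))"
  proof (rule sum.cong[OF refl])
    fix p assume "p \<in> {p. p permutes {0..<n}}"
    hence p: "p permutes {0..<n}" by simp
    have "(\<Sum>t=0..<n. (\<Prod>i=0..<n. if p i = t then g (i, p i) else f (i, p i)))
        = (\<Sum>s\<in>{0..<n}. (\<Prod>i=0..<n. if p i = p s then g (i, p i) else f (i, p i)))"
      using sum.reindex[of p "{0..<n}" "\<lambda>t. (\<Prod>i=0..<n. if p i = t then g (i, p i) else f (i, p i))"]
        permutes_image[OF p] permutes_inj_on[OF p] by simp
    also have "\<dots> = (\<Sum>s\<in>{0..<n}. (\<Prod>i=0..<n. if i = s then g (i, p i) else f (i, p i)))"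
      by (rule sum.cong[OF refl], rule prod.cong[OF refl]) (use permutes_inj[OF p] in \<open>auto simp: inj_eq\<close>)
    finally have eq: "(\<Sum>t=0..<n. (\<Prod>i=0..<n. if p i = t then g (i, p i) else f (i, p i)))
        = (\<Sum>s\<in>{0..<n}. (\<Prod>i=0..<n. if i = s then g (i, p i) else f (i, p i)))" .
    show "(\<Sum>t=0..<n. signof p * (\<Prod>i=0..<n. if p i = t then g (i, p i) else f (i, p i)))
        = signof p * (\<Sum>t=0..<n. \<Prod>i=0..<n. if i = t then g (i, p i) else f (i, p i))"
      by (simp only: sum_distrib_left[symmetric] eq)
  qed
  finally show ?thesis .
qed

text \<open>Both sums expand to the same Leibniz sum, since in the term of a permutation \<open>p\<close>
  the entry in column \<open>t\<close> is the one in row \<open>inv p t\<close>.\<close>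
lemma sum_det_replace_row_eq_replace_col:
  "(\<Sum>t=0..<n. det (mat n n (\<lambda>(i,j). if i = t then g (i,j) else f (i,j))))
 = (\<Sum>t=0..<n. det (mat n n (\<lambda>(i,j). if j = t then g (i,j) else f (i,j))))"
  unfolding sum_det_replace_row_Leibniz sum_det_replace_col_Leibniz ..

lemma prod_scale_one_factor:
  assumes "finite S" "t \<in> S"
  shows "(\<Prod>i\<in>S. if i = t then a * F i else F i) = a * (\<Prod>i\<in>S. F i)"
proof -
  have "(\<Prod>i\<in>S. if i = t then a * F i else F i) = (\<Prod>i\<in>S. (if i = t then a else 1) * F i)"
    by (rule prod.cong) auto
  also have "\<dots> = (\<Prod>i\<in>S. (if i = t then a else 1)) * (\<Prod>i\<in>S. F i)" by (rule prod.distrib)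
  also have "(\<Prod>i\<in>S. (if i = t then a else 1)) = a" using assms by (simp add: prod.delta)
  finally show ?thesis .
qed

text \<open>On each Leibniz term the scalings act as a derivation, contributing
  \<open>\<Sum>\<^sub>t (x t - y (p t)) = \<Sum> x - \<Sum> y\<close>.\<close>
lemma sum_det_scale_row_by_difference:
  fixes f :: "nat \<times> nat \<Rightarrow> 'a::comm_ring_1"
  shows "(\<Sum>t=0..<n. det (mat n n (\<lambda>(i,j). if i = t then (x i - y j) * f (i,j) else f (i,j))))
   = ((\<Sum>i=0..<n. x i) - (\<Sum>j=0..<n. y j)) * det (mat n n f)"
proof -
  have "(\<Sum>t=0..<n. det (mat n n (\<lambda>(i,j). if i = t then (x i - y j) * f (i,j) else f (i,j))))
     = (\<Sum>p\<in>{p. p permutes {0..<n}}. signof p *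
        (\<Sum>t=0..<n. \<Prod>i=0..<n. if i = t then (x i - y (p i)) * f (i, p i) else f (i, p i)))"
    using sum_det_replace_row_Leibniz[of n "\<lambda>ij. (x (fst ij) - y (snd ij)) * f ij" f] unfolding fst_conv snd_conv .
  also have "\<dots> = (\<Sum>p\<in>{p. p permutes {0..<n}}. ((\<Sum>i=0..<n. x i) - (\<Sum>j=0..<n. y j)) * (signof p * (\<Prod>i=0..<n. f (i, p i))))"
  proof (rule sum.cong[OF refl])
    fix p assume "p \<in> {p. p permutes {0..<n}}"
    hence p: "p permutes {0..<n}" by simp
    have "(\<Sum>t=0..<n. \<Prod>i=0..<n. if i = t then (x i - y (p i)) * f (i, p i) else f (i, p i))
       = (\<Sum>t=0..<n. (x t - y (p t)) * (\<Prod>i=0..<n. f (i, p i)))"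
      by (rule sum.cong[OF refl]) (subst prod_scale_one_factor[symmetric], auto intro: prod.cong)
    also have "\<dots> = ((\<Sum>t=0..<n. x t) - (\<Sum>t=0..<n. y (p t))) * (\<Prod>i=0..<n. f (i, p i))"
      by (simp only: sum_distrib_right[symmetric] sum_subtractf)
    also have "(\<Sum>t=0..<n. y (p t)) = (\<Sum>j=0..<n. y j)"
      using sum.reindex[of p "{0..<n}" y] permutes_image[OF p] permutes_inj_on[OF p] by simp
    finally have eq: "(\<Sum>t=0..<n. \<Prod>i=0..<n. if i = t then (x i - y (p i)) * f (i, p i) else f (i, p i))
       = ((\<Sum>i=0..<n. x i) - (\<Sum>j=0..<n. y j)) * (\<Prod>i=0..<n. f (i, p i))" .
    show "signof p * (\<Sum>t=0..<n. \<Prod>i=0..<n. if i = t then (x i - y (p i)) * f (i, p i) else f (i, p i))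
       = ((\<Sum>i=0..<n. x i) - (\<Sum>j=0..<n. y j)) * (signof p * (\<Prod>i=0..<n. f (i, p i)))"
      unfolding eq by (simp only: mult_ac)
  qed
  also have "\<dots> = ((\<Sum>i=0..<n. x i) - (\<Sum>j=0..<n. y j)) * det (mat n n f)"
    by (simp add: det_mat_Leibniz sum_distrib_left)
  finally show ?thesis .
qed

lemma det_mat_scale_rows:
  fixes f :: "nat \<times> nat \<Rightarrow> 'a::comm_ring_1"
  shows "det (mat n n (\<lambda>(i,j). c i * f (i,j))) = (\<Prod>i=0..<n. c i) * det (mat n n f)"
  by (simp add: det_mat_Leibniz sum_distrib_left prod.distrib algebra_simps)

lemma det_first_row_single_entry:
  fixes A :: "'a::comm_ring_1 mat"
  assumes A: "A \<in> carrier_mat n n" and n: "0 < n"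
    and r: "\<And>j. j < n \<Longrightarrow> A $$ (0,j) = (if j = 0 then c else 0)"
  shows "det A = c * det (mat_delete A 0 0)"
proof -
  have "det A = (\<Sum>j<n. A $$ (0,j) * cofactor A 0 j)" by (rule laplace_expansion_row[OF A n])
  also have "\<dots> = (\<Sum>j<n. if j = 0 then c * cofactor A 0 j else 0)"
    by (rule sum.cong) (auto simp: r)
  also have "\<dots> = c * cofactor A 0 0" using n by (simp add: sum.delta)
  finally show ?thesis by (simp add: cofactor_def)
qed

lemma mat_delete_mat_0_0:
  "mat_delete (mat (Suc n) (Suc n) f) 0 0 = mat n n (\<lambda>(i,j). f (Suc i, Suc j))"
  by (rule eq_matI) (auto simp: mat_delete_def)

lemma det_mat_zero_row:
  assumes "t < N" "\<And>j. j < N \<Longrightarrow> f t j = 0"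
  shows "det (mat N N (\<lambda>(i,j). f i j)) = (0::'a::comm_ring_1)"
proof -
  have "\<And>p. p permutes {0..<N} \<Longrightarrow> (\<Prod>i=0..<N. f i (p i)) = 0"
  proof -
    fix p assume p: "p permutes {0..<N}"
    have "p t < N" using permutes_in_image[OF p] assms(1) by simp
    hence "f t (p t) = 0" using assms(2) by simp
    thus "(\<Prod>i=0..<N. f i (p i)) = 0" using assms(1) by (intro prod_zero) auto
  qed
  thus ?thesis by (simp add: det_mat_Leibniz)
qed

section \<open>Falling factorials and the Vandermonde determinant\<close>

definition falling_fact :: "'a::comm_ring_1 \<Rightarrow> nat \<Rightarrow> 'a" where
  "falling_fact x j = (\<Prod>t<j. x - of_nat t)"

lemma falling_fact_0[simp]: "falling_fact x 0 = 1" by (simp add: falling_fact_def)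
lemma falling_fact_Suc: "falling_fact x (Suc j) = falling_fact x j * (x - of_nat j)" by (simp add: falling_fact_def)

definition index_pairs :: "nat \<Rightarrow> (nat \<times> nat) set" where
  "index_pairs r = {(i, k). i < k \<and> k < r}"

lemma finite_index_pairs[simp]: "finite (index_pairs r)"
  by (rule finite_subset[of _ "{..<r} \<times> {..<r}"]) (auto simp: index_pairs_def)

lemma index_pairs_Suc:
  "index_pairs (Suc r) = (\<lambda>k. (0, Suc k)) ` {..<r} \<union> (\<lambda>(i,k). (Suc i, Suc k)) ` index_pairs r"
proof (rule Set.set_eqI)
  fix z :: "nat \<times> nat"
  obtain i k where z: "z = (i,k)" by (cases z)
  show "z \<in> index_pairs (Suc r) \<longleftrightarrow> z \<in> (\<lambda>k. (0, Suc k)) ` {..<r} \<union> (\<lambda>(i,k). (Suc i, Suc k)) ` index_pairs r"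
  proof
    assume "z \<in> index_pairs (Suc r)"
    hence ik: "i < k" "k < Suc r" by (auto simp: index_pairs_def z)
    then obtain k' where k': "k = Suc k'" by (cases k) auto
    show "z \<in> (\<lambda>k. (0, Suc k)) ` {..<r} \<union> (\<lambda>(i,k). (Suc i, Suc k)) ` index_pairs r"
    proof (cases i)
      case 0 thus ?thesis using ik k' z by auto
    next
      case (Suc i')
      hence "(i', k') \<in> index_pairs r" using ik k' by (auto simp: index_pairs_def)
      thus ?thesis using Suc k' z by force
    qed
  next
    assume "z \<in> (\<lambda>k. (0, Suc k)) ` {..<r} \<union> (\<lambda>(i,k). (Suc i, Suc k)) ` index_pairs r"
    thus "z \<in> index_pairs (Suc r)" by (auto simp: index_pairs_def)
  qed
qed

lemma prod_index_pairs_Suc: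
  "(\<Prod>(i,k)\<in>index_pairs (Suc r). F i k) = (\<Prod>k<r. F 0 (Suc k)) * (\<Prod>(i,k)\<in>index_pairs r. F (Suc i) (Suc k))"
proof -
  have disj: "(\<lambda>k. (0::nat, Suc k)) ` {..<r} \<inter> (\<lambda>(i,k). (Suc i, Suc k)) ` index_pairs r = {}" by auto
  have inj1: "inj_on (\<lambda>k. (0::nat, Suc k)) {..<r}" by (auto simp: inj_on_def)
  have inj2: "inj_on (\<lambda>(i,k). (Suc i, Suc k)) (index_pairs r)" by (auto simp: inj_on_def)
  have "(\<Prod>(i,k)\<in>index_pairs (Suc r). F i k)
      = (\<Prod>z\<in>(\<lambda>k. (0, Suc k)) ` {..<r}. case z of (i,k) \<Rightarrow> F i k) *
        (\<Prod>z\<in>(\<lambda>(i,k). (Suc i, Suc k)) ` index_pairs r. case z of (i,k) \<Rightarrow> F i k)"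
    unfolding index_pairs_Suc by (rule prod.union_disjoint) (use disj in auto)
  also have "(\<Prod>z\<in>(\<lambda>k. (0, Suc k)) ` {..<r}. case z of (i,k) \<Rightarrow> F i k) = (\<Prod>k<r. F 0 (Suc k))"
    by (subst prod.reindex[OF inj1]) simp
  also have "(\<Prod>z\<in>(\<lambda>(i,k). (Suc i, Suc k)) ` index_pairs r. case z of (i,k) \<Rightarrow> F i k)
      = (\<Prod>(i,k)\<in>index_pairs r. F (Suc i) (Suc k))"
    by (subst prod.reindex[OF inj2]) (simp add: case_prod_beta)
  finally show ?thesis .
qed

lemma falling_fact_column_step:
  "falling_fact x (Suc j) - (y - of_nat j) * falling_fact x j = (x - y) * falling_fact x j"
  by (simp add: falling_fact_Suc algebra_simps)

text \<open>Right multiplication by this unitriangular matrix subtracts \<open>y - j\<close> times column \<open>j\<close>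
  from column \<open>j + 1\<close>, which turns \<open>falling_fact x (j + 1)\<close> into \<open>(x - y) * falling_fact x j\<close>.\<close>
lemma mat_falling_fact_mult_unitriangular:
  fixes x :: "nat \<Rightarrow> 'a::comm_ring_1"
  shows "mat n n (\<lambda>(i,j). falling_fact (x i) j)
         * mat n n (\<lambda>(p,q). if p = q then 1 else if Suc p = q then - (y - of_nat p) else 0)
       = mat n n (\<lambda>(i,j). if j = 0 then 1 else (x i - y) * falling_fact (x i) (j - 1))"
    (is "?M * ?U = ?R")
proof (rule eq_matI)
  fix i j assume "i < dim_row ?R" "j < dim_col ?R"
  hence i: "i < n" and j: "j < n" by auto
  have "(?M * ?U) $$ (i,j) = (\<Sum>p = 0..<n. ?M $$ (i,p) * ?U $$ (p,j))"
    using i j by (simp add: scalar_prod_def)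
  also have "\<dots> = (\<Sum>p = 0..<n. (if p = j then falling_fact (x i) p else 0) +
                 (if Suc p = j then - (y - of_nat p) * falling_fact (x i) p else 0))"
    by (rule sum.cong[OF refl]) (use i j in \<open>auto simp: ring_distribs\<close>)
  also have "\<dots> = falling_fact (x i) j + (if j = 0 then 0 else - (y - of_nat (j - 1)) * falling_fact (x i) (j - 1))"
  proof (cases j)
    case (Suc j')
    have "(\<Sum>p = 0..<n. (if Suc p = j then - (y - of_nat p) * falling_fact (x i) p else 0))
        = (\<Sum>p = 0..<n. (if p = j' then - (y - of_nat p) * falling_fact (x i) p else 0))"
      using Suc by (intro sum.cong) auto
    thus ?thesis using Suc j by (simp add: sum.distrib sum.delta)
  qed (use j in \<open>simp add: sum.distrib\<close>)
  also have "\<dots> = ?R $$ (i,j)"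
    using i j falling_fact_column_step[of "x i" "j - 1" y] by (cases j) (simp_all add: algebra_simps)
  finally show "(?M * ?U) $$ (i,j) = ?R $$ (i,j)" .
qed auto

lemma det_falling_fact_eq_vandermonde:
  fixes x :: "nat \<Rightarrow> 'a::comm_ring_1"
  shows "det (mat r r (\<lambda>(i,j). falling_fact (x i) j)) = (\<Prod>(i,k)\<in>index_pairs r. x k - x i)"
proof (induction r arbitrary: x)
  case 0
  have "index_pairs 0 = {}" by (auto simp: index_pairs_def)
  thus ?case by (simp add: det_mat_Leibniz)
next
  case (Suc r)
  define M where "M = mat (Suc r) (Suc r) (\<lambda>(i,j). falling_fact (x i) j)"
  define U :: "'a mat" where
    "U = mat (Suc r) (Suc r) (\<lambda>(p,q). if p = q then 1 else if Suc p = q then - (x 0 - of_nat p) else 0)"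
  have M: "M \<in> carrier_mat (Suc r) (Suc r)" and U: "U \<in> carrier_mat (Suc r) (Suc r)"
    by (auto simp: M_def U_def)
  have "det U = prod_list (diag_mat U)"
    by (rule det_upper_triangular[OF _ U]) (auto simp: upper_triangular_def U_def)
  hence "det U = 1" by (simp add: prod_list_diag_prod U_def)
  hence "det M = det (M * U)" using det_mult[OF M U] by simp
  also have "\<dots> = 1 * det (mat r r (\<lambda>(i,j). (x (Suc i) - x 0) * falling_fact (x (Suc i)) j))"
    unfolding M_def U_def mat_falling_fact_mult_unitriangular
    by (subst det_first_row_single_entry[of _ "Suc r"]) (auto simp: mat_delete_mat_0_0)
  also have "\<dots> = (\<Prod>i=0..<r. x (Suc i) - x 0) * det (mat r r (\<lambda>(i,j). falling_fact (x (Suc i)) j))"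
    using det_mat_scale_rows[of r "\<lambda>i. x (Suc i) - x 0" "\<lambda>(i,j). falling_fact (x (Suc i)) j"]
    by (simp add: case_prod_beta)
  finally show ?case
    unfolding M_def Suc.IH by (simp add: prod_index_pairs_Suc atLeast0LessThan)
qed

section \<open>Jacobi--Trudi determinants\<close>

definition jt_entry :: "(nat \<Rightarrow> 'a::comm_ring_1) \<Rightarrow> nat \<Rightarrow> nat \<Rightarrow> 'a" where
  "jt_entry h m j = (if j \<le> m then h (m - j) else 0)"

definition jt_det :: "(nat \<Rightarrow> 'a::comm_ring_1) \<Rightarrow> nat \<Rightarrow> (nat \<Rightarrow> nat) \<Rightarrow> 'a" where
  "jt_det h N b = det (mat N N (\<lambda>(i,j). jt_entry h (b i) j))"

lemma jt_det_cong:
  assumes "\<And>i. i < N \<Longrightarrow> b i = b' i"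
  shows "jt_det h N b = jt_det h N b'"
proof -
  have "mat N N (\<lambda>(i,j). jt_entry h (b i) j) = mat N N (\<lambda>(i,j). jt_entry h (b' i) j)"
    by (rule eq_matI) (auto simp: assms)
  thus ?thesis by (simp add: jt_det_def)
qed

lemma jt_det_drop_first:
  assumes h0: "h 0 = 1" and b0: "b' 0 = 0" and bs: "\<And>i. i < N \<Longrightarrow> b' (Suc i) = Suc (b i)"
  shows "jt_det h (Suc N) b' = jt_det h N b"
proof -
  have "jt_det h (Suc N) b' = 1 * det (mat_delete (mat (Suc N) (Suc N) (\<lambda>(i,j). jt_entry h (b' i) j)) 0 0)"
    unfolding jt_det_def by (rule det_first_row_single_entry[of _ "Suc N"]) (auto simp: jt_entry_def b0 h0)
  also have "mat_delete (mat (Suc N) (Suc N) (\<lambda>(i,j). jt_entry h (b' i) j)) 0 0 = mat N N (\<lambda>(i,j). jt_entry h (b i) j)"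
    unfolding mat_delete_mat_0_0 by (rule eq_matI) (auto simp: bs jt_entry_def)
  finally show ?thesis by (simp add: jt_det_def)
qed

lemma jt_det_identity:
  assumes h0: "h 0 = 1"
  shows "jt_det h N (\<lambda>i. i) = 1"
proof -
  have "det (mat N N (\<lambda>(i,j). jt_entry h i j)) = prod_list (diag_mat (mat N N (\<lambda>(i,j). jt_entry h i j)))"
    by (rule det_lower_triangular[of N]) (auto simp: jt_entry_def)
  also have "\<dots> = 1" by (simp add: prod_list_diag_prod jt_entry_def h0)
  finally show ?thesis by (simp add: jt_det_def)
qed

lemma jt_det_eq_rows:
  assumes "i < N" "i' < N" "i \<noteq> i'" "b i = b i'"
  shows "jt_det h N b = 0"
  unfolding jt_det_def
  by (rule det_identical_rows[of _ N i i']) (use assms in \<open>auto simp: row_def\<close>)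

text \<open>Summed over \<open>t\<close>, raising \<open>b\<^sub>t\<close> in row \<open>t\<close> equals shifting column \<open>t\<close> by one. A shifted column
  \<open>t > 0\<close> coincides with column \<open>t - 1\<close>, and shifting column \<open>0\<close> only changes the entry in row \<open>0\<close>
  (where \<open>b 0 = 0\<close>) from \<open>h 0 = 1\<close> to \<open>h 1\<close>.\<close>
lemma jt_det_pieri:
  assumes h0: "h 0 = 1" and b0: "b 0 = 0" and N: "0 < N"
  shows "h 1 * jt_det h N b = (\<Sum>t=0..<N. jt_det h N (b(t := Suc (b t))))"
proof -
  obtain N' where N': "N = Suc N'" using N by (cases N) auto
  let ?f = "\<lambda>ij::nat\<times>nat. jt_entry h (b (fst ij)) (snd ij)"
  let ?g = "\<lambda>ij::nat\<times>nat. jt_entry h (Suc (b (fst ij))) (snd ij)"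
  have "(\<Sum>t=0..<N. jt_det h N (b(t := Suc (b t))))
      = (\<Sum>t=0..<N. det (mat N N (\<lambda>(i,j). if i = t then ?g (i,j) else ?f (i,j))))"
    unfolding jt_det_def by (intro sum.cong refl arg_cong[where f=det] eq_matI) auto
  also have "\<dots> = (\<Sum>t=0..<N. det (mat N N (\<lambda>(i,j). if j = t then ?g (i,j) else ?f (i,j))))"
    by (rule sum_det_replace_row_eq_replace_col)
  also have "\<dots> = (\<Sum>t=0..<N. if t = 0 then det (mat N N (\<lambda>(i,j). if j = 0 then ?g (i,j) else ?f (i,j))) else 0)"
  proof (rule sum.cong[OF refl])
    fix t assume t: "t \<in> {0..<N}"
    show "det (mat N N (\<lambda>(i,j). if j = t then ?g (i,j) else ?f (i,j))) =
      (if t = 0 then det (mat N N (\<lambda>(i,j). if j = 0 then ?g (i,j) else ?f (i,j))) else 0)"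
    proof (cases "t = 0")
      case False
      show ?thesis using False
        by (simp, intro det_identical_columns[of _ N t "t - 1"]) (use t False in \<open>auto simp: col_def jt_entry_def intro!: eq_vecI\<close>)
    qed simp
  qed
  also have "\<dots> = det (mat N N (\<lambda>(i,j). if j = 0 then ?g (i,j) else ?f (i,j)))"
    using N by (simp add: sum.delta)
  also have "\<dots> = h 1 * det (mat_delete (mat N N (\<lambda>(i,j). if j = 0 then ?g (i,j) else ?f (i,j))) 0 0)"
    by (rule det_first_row_single_entry[of _ N]) (use N in \<open>auto simp: jt_entry_def b0\<close>)
  also have "mat_delete (mat N N (\<lambda>(i,j). if j = 0 then ?g (i,j) else ?f (i,j))) 0 0
      = mat_delete (mat N N (\<lambda>(i,j). jt_entry h (b i) j)) 0 0"
    unfolding N' mat_delete_mat_0_0 by (rule eq_matI) auto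
  also have "det \<dots> = jt_det h N b"
  proof -
    have "jt_det h N b = 1 * det (mat_delete (mat N N (\<lambda>(i,j). jt_entry h (b i) j)) 0 0)"
      unfolding jt_det_def by (rule det_first_row_single_entry[of _ N]) (use N in \<open>auto simp: jt_entry_def b0 h0\<close>)
    thus ?thesis by simp
  qed
  finally show ?thesis by (rule sym)
qed

section \<open>Partitions with a fixed number of parts\<close>

definition padded_partitions :: "nat \<Rightarrow> nat \<Rightarrow> nat list set" where
  "padded_partitions N n = {lam. length lam = N \<and> sorted_wrt (\<ge>) lam \<and> sum_list lam = n}"

definition add_box :: "nat \<Rightarrow> nat list \<Rightarrow> nat list" where
  "add_box k lam = lam[k := Suc (lam ! k)]"

definition remove_box :: "nat \<Rightarrow> nat list \<Rightarrow> nat list" where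
  "remove_box k lam = lam[k := lam ! k - 1]"

lemma sorted_wrt_ge_iff_nth_Suc: "sorted_wrt (\<ge>) (xs::nat list) \<longleftrightarrow> (\<forall>i. Suc i < length xs \<longrightarrow> xs ! Suc i \<le> xs ! i)"
  by (subst sorted_wrt_iff_nth_Suc_transp) (auto simp: transp_def)

lemma sorted_wrt_ge_nth: "sorted_wrt (\<ge>) (xs::nat list) \<Longrightarrow> i \<le> j \<Longrightarrow> j < length xs \<Longrightarrow> xs ! j \<le> xs ! i"
  by (cases "i = j") (auto simp: sorted_wrt_iff_nth_less)

lemma finite_padded_partitions: "finite (padded_partitions N n)"
proof (rule finite_subset)
  show "padded_partitions N n \<subseteq> {xs. set xs \<subseteq> {..n} \<and> length xs = N}"
    by (auto simp: padded_partitions_def member_le_sum_list)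
  show "finite {xs. set xs \<subseteq> {..n} \<and> length xs = N}"
    by (rule finite_lists_length_eq) simp
qed

lemma padded_partitions_0: "padded_partitions N 0 = {replicate N 0}"
proof (rule Set.set_eqI)
  fix xs show "xs \<in> padded_partitions N 0 \<longleftrightarrow> xs \<in> {replicate N 0}"
  proof
    assume "xs \<in> padded_partitions N 0"
    hence "length xs = N" "\<forall>x\<in>set xs. x = 0" by (auto simp: padded_partitions_def)
    thus "xs \<in> {replicate N 0}" using replicate_length_same[of xs 0] by simp
  qed (auto simp: padded_partitions_def sorted_wrt_iff_nth_less)
qed

lemma add_box_in_padded_partitions:
  assumes mu: "mu \<in> padded_partitions N n" and k: "k < N" and c: "k = 0 \<or> mu ! k < mu ! (k - 1)"
  shows "add_box k mu \<in> padded_partitions N (Suc n)"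
proof -
  have len: "length mu = N" and s: "sorted_wrt (\<ge>) mu" and sm: "sum_list mu = n"
    using mu by (auto simp: padded_partitions_def)
  have "sorted_wrt (\<ge>) (add_box k mu)"
    unfolding sorted_wrt_ge_iff_nth_Suc
  proof (intro allI impI)
    fix i assume i: "Suc i < length (add_box k mu)"
    hence i': "Suc i < N" by (simp add: add_box_def len)
    have a: "mu ! Suc i \<le> mu ! i" using s i' len by (simp add: sorted_wrt_ge_iff_nth_Suc)
    show "add_box k mu ! Suc i \<le> add_box k mu ! i"
      using a c i' len k by (auto simp: add_box_def nth_list_update)
  qed
  moreover have "sum_list (add_box k mu) = Suc n"
    using sm k len by (simp add: add_box_def sum_list_update)
  ultimately show ?thesis using len by (simp add: padded_partitions_def add_box_def)
qed

lemma add_box_not_in_padded_partitions: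
  assumes mu: "mu \<in> padded_partitions N n" and k: "k < N" and na: "add_box k mu \<notin> padded_partitions N (Suc n)"
  shows "0 < k \<and> mu ! (k - 1) = mu ! k"
proof -
  have "\<not> (k = 0 \<or> mu ! k < mu ! (k - 1))" using add_box_in_padded_partitions[OF mu k] na by blast
  moreover have "k > 0 \<Longrightarrow> mu ! k \<le> mu ! (k - 1)" using mu k by (intro sorted_wrt_ge_nth) (auto simp: padded_partitions_def)
  ultimately show ?thesis by auto
qed

lemma remove_box_in_padded_partitions:
  assumes la: "la \<in> padded_partitions N n" and k: "k < N" and p: "0 < la ! k"
    and c: "Suc k = N \<or> la ! Suc k < la ! k"
  shows "remove_box k la \<in> padded_partitions N (n - 1)"
proof -
  have len: "length la = N" and s: "sorted_wrt (\<ge>) la" and sm: "sum_list la = n"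
    using la by (auto simp: padded_partitions_def)
  have "sorted_wrt (\<ge>) (remove_box k la)"
    unfolding sorted_wrt_ge_iff_nth_Suc
  proof (intro allI impI)
    fix i assume i: "Suc i < length (remove_box k la)"
    hence i': "Suc i < N" by (simp add: remove_box_def len)
    have a: "la ! Suc i \<le> la ! i" using s i' len by (simp add: sorted_wrt_ge_iff_nth_Suc)
    show "remove_box k la ! Suc i \<le> remove_box k la ! i"
      using a c i' len k by (auto simp: remove_box_def nth_list_update)
  qed
  moreover have "sum_list (remove_box k la) = n - 1"
  proof -
    have "la ! k \<le> n" using sm k len elem_le_sum_list by metis
    thus ?thesis using sm k len p by (simp add: remove_box_def sum_list_update)
  qed
  ultimately show ?thesis using len by (simp add: padded_partitions_def remove_box_def)
qed

lemma remove_box_not_in_padded_partitions: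
  assumes la: "la \<in> padded_partitions N n" and k: "k < N" and p: "0 < la ! k" and ns: "remove_box k la \<notin> padded_partitions N (n - 1)"
  shows "Suc k < N \<and> la ! Suc k = la ! k"
proof -
  have "\<not> (Suc k = N \<or> la ! Suc k < la ! k)" using remove_box_in_padded_partitions[OF la k p] ns by blast
  moreover have "Suc k < N \<Longrightarrow> la ! Suc k \<le> la ! k" using la by (intro sorted_wrt_ge_nth) (auto simp: padded_partitions_def)
  ultimately show ?thesis using k by auto
qed

lemma remove_box_add_box[simp]: "k < length mu \<Longrightarrow> remove_box k (add_box k mu) = mu"
  by (auto simp: remove_box_def add_box_def)

lemma add_box_remove_box: "k < length la \<Longrightarrow> 0 < la ! k \<Longrightarrow> add_box k (remove_box k la) = la"
  by (auto simp: remove_box_def add_box_def)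

lemma remove_box_in_padded_partitions_pos:
  assumes la: "la \<in> padded_partitions N (Suc n)" and k: "k < N" and s: "remove_box k la \<in> padded_partitions N n"
  shows "0 < la ! k"
proof (rule ccontr)
  assume "\<not> 0 < la ! k"
  hence "remove_box k la = la" by (simp add: remove_box_def) (metis list_update_id)
  thus False using la s by (simp add: padded_partitions_def)
qed

lemma padded_partitions_last_zero:
  assumes mu: "mu \<in> padded_partitions N n" and N: "n < N"
  shows "mu ! (N - 1) = 0"
proof (rule ccontr)
  assume a: "mu ! (N - 1) \<noteq> 0"
  have len: "length mu = N" and s: "sorted_wrt (\<ge>) mu" and sm: "sum_list mu = n"
    using mu by (auto simp: padded_partitions_def)
  have "\<And>i. i \<in> {0..<N} \<Longrightarrow> 1 \<le> mu ! i"
  proof -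
    fix i assume "i \<in> {0..<N}"
    hence "mu ! (N - 1) \<le> mu ! i" using s len by (intro sorted_wrt_ge_nth) auto
    thus "1 \<le> mu ! i" using a by simp
  qed
  hence "(\<Sum>i=0..<N. (1::nat)) \<le> (\<Sum>i=0..<N. mu ! i)" by (rule sum_mono)
  also have "\<dots> = n" using sm len by (simp add: sum_list_sum_nth)
  finally show False using N by simp
qed

section \<open>The branching rule for standard Young tableaux\<close>

lemma sytI:
  assumes "bij_betw T (young_cells lam) {1..sum_list lam}"
    and "\<And>i j i' j'. (i, j) \<in> young_cells lam \<Longrightarrow> (i', j') \<in> young_cells lam \<Longrightarrow> i \<le> i' \<Longrightarrow> j \<le> j' \<Longrightarrow> T (i, j) \<le> T (i', j')"
    and "\<And>c. c \<notin> young_cells lam \<Longrightarrow> T c = 0"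
  shows "T \<in> syt lam"
  using assms unfolding syt_def by blast

lemma sytD:
  assumes "T \<in> syt lam"
  shows "bij_betw T (young_cells lam) {1..sum_list lam}"
    and "\<And>i j i' j'. (i, j) \<in> young_cells lam \<Longrightarrow> (i', j') \<in> young_cells lam \<Longrightarrow> i \<le> i' \<Longrightarrow> j \<le> j' \<Longrightarrow> T (i, j) \<le> T (i', j')"
    and "\<And>c. c \<notin> young_cells lam \<Longrightarrow> T c = 0"
  using assms unfolding syt_def by blast+

lemma finite_young_cells: "finite (young_cells lam)"
proof (rule finite_subset)
  show "young_cells lam \<subseteq> {..<length lam} \<times> {..<sum_list lam}"
    unfolding young_cells_def using elem_le_sum_list by fastforce
qed auto

lemma finite_syt: "finite (syt lam)"
proof (rule finite_subset)
  show "syt lam \<subseteq> {f. \<forall>x. (x \<in> young_cells lam \<longrightarrow> f x \<in> {1..sum_list lam}) \<and> (x \<notin> young_cells lam \<longrightarrow> f x = 0)}"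
    using sytD by (fastforce dest: bij_betwE)
  show "finite {f. \<forall>x. (x \<in> young_cells lam \<longrightarrow> f x \<in> {1..sum_list lam}) \<and> (x \<notin> young_cells lam \<longrightarrow> f x = 0)}"
    by (rule finite_set_of_finite_funs) (auto simp: finite_young_cells)
qed

lemma young_cells_remove_box:
  assumes "k < length la" "0 < la ! k"
  shows "young_cells (remove_box k la) = young_cells la - {(k, la ! k - 1)}"
  using assms by (auto simp: young_cells_def remove_box_def nth_list_update split: if_splits)

lemma removable_corner:
  assumes la: "la \<in> padded_partitions N (Suc n)" and k: "k < N"
    and rem: "remove_box k la \<in> padded_partitions N n"
  shows "0 < la ! k" and "Suc k = N \<or> la ! Suc k < la ! k"
proof -
  show pos: "0 < la ! k" by (rule remove_box_in_padded_partitions_pos[OF la k rem])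
  have len: "length la = N" using la by (simp add: padded_partitions_def)
  show "Suc k = N \<or> la ! Suc k < la ! k"
  proof (cases "Suc k < N")
    case True
    have "remove_box k la ! Suc k \<le> remove_box k la ! k"
      using rem True len by (intro sorted_wrt_ge_nth) (auto simp: padded_partitions_def remove_box_def)
    thus ?thesis using True len pos by (simp add: remove_box_def nth_list_update)
  qed (use k in simp)
qed

lemma removable_corner_maximal:
  assumes la: "la \<in> padded_partitions N (Suc n)" and k: "k < N"
    and rem: "remove_box k la \<in> padded_partitions N n"
    and cell: "(i, j) \<in> young_cells la" and "k \<le> i" and "la ! k - 1 \<le> j"
  shows "(i, j) = (k, la ! k - 1)"
proof (cases "i = k")
  case True thus ?thesis using cell \<open>la ! k - 1 \<le> j\<close> by (auto simp: young_cells_def)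
next
  case False
  hence "Suc k \<le> i" using \<open>k \<le> i\<close> by simp
  moreover have i: "i < N" and "j < la ! i" using cell la by (auto simp: young_cells_def padded_partitions_def)
  ultimately have "la ! i \<le> la ! Suc k"
    using la by (intro sorted_wrt_ge_nth) (auto simp: padded_partitions_def)
  moreover have "la ! Suc k < la ! k" using removable_corner(2)[OF la k rem] \<open>Suc k \<le> i\<close> i by auto
  ultimately show ?thesis using \<open>j < la ! i\<close> \<open>la ! k - 1 \<le> j\<close> by simp
qed

text \<open>The largest entry of a standard tableau has no larger neighbour to its right or below,
  so it sits in a removable corner.\<close>
lemma syt_max_entry_in_removable_corner:
  assumes la: "la \<in> padded_partitions N (Suc n)" and T: "T \<in> syt la"
  obtains k where "k < N" "remove_box k la \<in> padded_partitions N n" "T (k, la ! k - 1) = Suc n"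
proof -
  have len: "length la = N" and sm: "sum_list la = Suc n"
    using la by (auto simp: padded_partitions_def)
  have bij: "bij_betw T (young_cells la) {1..Suc n}" using sytD(1)[OF T] sm by simp
  have inj: "inj_on T (young_cells la)" using bij by (simp add: bij_betw_def)
  have no_larger_neighbour: "T c' \<noteq> T c" if "c \<in> young_cells la" "c' \<in> young_cells la" "c' \<noteq> c" for c c'
    using that inj by (auto dest: inj_onD)
  have vals: "\<And>c. c \<in> young_cells la \<Longrightarrow> T c \<le> Suc n" using bij by (auto dest: bij_betwE)
  have "Suc n \<in> T ` young_cells la" using bij by (auto simp: bij_betw_def)
  then obtain k j where kj: "(k, j) \<in> young_cells la" and Tkj: "T (k, j) = Suc n" by auto
  have kN: "k < N" and jk: "j < la ! k" using kj len by (auto simp: young_cells_def)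
  have larger: "T (k, j) < T (i', j')"
    if "(i', j') \<in> young_cells la" "k \<le> i'" "j \<le> j'" "(i', j') \<noteq> (k, j)" for i' j'
    using sytD(2)[OF T kj that(1-3)] no_larger_neighbour[OF kj that(1,4)] by simp
  have j_eq: "j = la ! k - 1"
  proof (rule ccontr)
    assume "j \<noteq> la ! k - 1"
    hence "(k, Suc j) \<in> young_cells la" using jk kN len by (auto simp: young_cells_def)
    thus False using larger[of k "Suc j"] vals[of "(k, Suc j)"] Tkj by simp
  qed
  have corner: "Suc k = N \<or> la ! Suc k < la ! k"
  proof (rule ccontr)
    assume "\<not> (Suc k = N \<or> la ! Suc k < la ! k)"
    hence "(Suc k, j) \<in> young_cells la" using kN jk len by (auto simp: young_cells_def)
    thus False using larger[of "Suc k" j] vals[of "(Suc k, j)"] Tkj by simp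
  qed
  have "remove_box k la \<in> padded_partitions N (Suc n - 1)"
    by (rule remove_box_in_padded_partitions[OF la kN]) (use jk corner in auto)
  thus ?thesis using that kN Tkj j_eq by simp
qed

lemma syt_remove_corner:
  assumes la: "la \<in> padded_partitions N (Suc n)" and k: "k < N"
    and rem: "remove_box k la \<in> padded_partitions N n"
    and T: "T \<in> syt la" and Tc: "T (k, la ! k - 1) = Suc n"
  shows "T((k, la ! k - 1) := 0) \<in> syt (remove_box k la)"
proof -
  define c where "c = (k, la ! k - 1)"
  have cells: "young_cells (remove_box k la) = young_cells la - {c}"
    using young_cells_remove_box[of k la] removable_corner(1)[OF la k rem] k la
    by (simp add: c_def padded_partitions_def)
  have sum: "sum_list (remove_box k la) = n" using rem by (simp add: padded_partitions_def)
  have c: "c \<in> young_cells la"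
    using removable_corner(1)[OF la k rem] k la by (simp add: c_def young_cells_def padded_partitions_def)
  have bij: "bij_betw T (young_cells la) {1..Suc n}"
    using sytD(1)[OF T] la by (simp add: padded_partitions_def)
  have inj: "inj_on T (young_cells la)" using bij by (simp add: bij_betw_def)
  have "T ` (young_cells la - {c}) = T ` young_cells la - T ` {c}"
    by (rule inj_on_image_set_diff[OF inj]) (use c in auto)
  also have "\<dots> = {1..n}" using bij Tc by (auto simp: bij_betw_def c_def)
  finally have "bij_betw T (young_cells la - {c}) {1..n}"
    using inj by (simp add: bij_betw_def inj_on_diff)
  hence "bij_betw (T(c := 0)) (young_cells (remove_box k la)) {1..sum_list (remove_box k la)}"
    unfolding cells sum by (rule bij_betw_cong[THEN iffD1, rotated]) auto
  moreover have "(T(c := 0)) (i, j) \<le> (T(c := 0)) (i', j')"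
    if "(i, j) \<in> young_cells (remove_box k la)" "(i', j') \<in> young_cells (remove_box k la)"
       "i \<le> i'" "j \<le> j'" for i j i' j'
    using that sytD(2)[OF T, of i j i' j'] unfolding cells by auto
  moreover have "(T(c := 0)) x = 0" if "x \<notin> young_cells (remove_box k la)" for x
    using that sytD(3)[OF T, of x] unfolding cells by auto
  ultimately show ?thesis unfolding c_def by (rule sytI)
qed

lemma syt_add_corner:
  assumes la: "la \<in> padded_partitions N (Suc n)" and k: "k < N"
    and rem: "remove_box k la \<in> padded_partitions N n"
    and T: "T \<in> syt (remove_box k la)"
  shows "T((k, la ! k - 1) := Suc n) \<in> syt la"
proof -
  define c where "c = (k, la ! k - 1)"
  define T' where "T' = T(c := Suc n)"
  have cells: "young_cells (remove_box k la) = young_cells la - {c}"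
    using young_cells_remove_box[of k la] removable_corner(1)[OF la k rem] k la
    by (simp add: c_def padded_partitions_def)
  have sm: "sum_list la = Suc n" using la by (simp add: padded_partitions_def)
  have c: "c \<in> young_cells la"
    using removable_corner(1)[OF la k rem] k la by (simp add: c_def young_cells_def padded_partitions_def)
  have bij: "bij_betw T (young_cells la - {c}) {1..n}"
    using sytD(1)[OF T] rem unfolding cells by (simp add: padded_partitions_def)
  hence "bij_betw T' (young_cells la - {c}) {1..n}"
    by (rule bij_betw_cong[THEN iffD1, rotated]) (auto simp: T'_def)
  hence "bij_betw T' ((young_cells la - {c}) \<union> {c}) ({1..n} \<union> {T' c})"
    by (rule notIn_Un_bij_betw[rotated 2]) (auto simp: T'_def)
  moreover have "(young_cells la - {c}) \<union> {c} = young_cells la" using c by auto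
  moreover have "{1..n} \<union> {T' c} = {1..sum_list la}" using sm by (auto simp: T'_def)
  ultimately have "bij_betw T' (young_cells la) {1..sum_list la}" by simp
  moreover have "T' (i, j) \<le> T' (i', j')"
    if a: "(i, j) \<in> young_cells la" and a': "(i', j') \<in> young_cells la" and "i \<le> i'" "j \<le> j'" for i j i' j'
  proof (cases "(i', j') = c")
    case True
    have "T (i, j) \<le> n" if "(i, j) \<noteq> c" using bij a that by (auto dest: bij_betwE)
    thus ?thesis using True by (cases "(i, j) = c") (auto simp: T'_def)
  next
    case False
    have "(i, j) \<noteq> c"
      using removable_corner_maximal[OF la k rem a'] False \<open>i \<le> i'\<close> \<open>j \<le> j'\<close> by (auto simp: c_def)
    thus ?thesis using False sytD(2)[OF T, of i j i' j'] a a' \<open>i \<le> i'\<close> \<open>j \<le> j'\<close>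
      unfolding cells T'_def by auto
  qed
  moreover have "T' x = 0" if "x \<notin> young_cells la" for x
    using that sytD(3)[OF T, of x] c unfolding cells T'_def by auto
  ultimately show ?thesis unfolding T'_def c_def by (intro sytI)
qed

lemma bij_betw_syt_remove_corner:
  assumes la: "la \<in> padded_partitions N (Suc n)" and k: "k < N"
    and rem: "remove_box k la \<in> padded_partitions N n"
  shows "bij_betw (\<lambda>T. T((k, la ! k - 1) := 0))
           {T \<in> syt la. T (k, la ! k - 1) = Suc n} (syt (remove_box k la))"
proof (rule bij_betw_byWitness[where f' = "\<lambda>T. T((k, la ! k - 1) := Suc n)"])
  have "k < length la" "0 < la ! k" using k la removable_corner(1)[OF la k rem]
    by (auto simp: padded_partitions_def)
  hence unfilled: "T (k, la ! k - 1) = 0" if "T \<in> syt (remove_box k la)" for T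
    using sytD(3)[OF that] young_cells_remove_box by auto
  show "\<forall>T\<in>{T \<in> syt la. T (k, la ! k - 1) = Suc n}. (T((k, la ! k - 1) := 0))((k, la ! k - 1) := Suc n) = T"
    by auto
  show "\<forall>T\<in>syt (remove_box k la). (T((k, la ! k - 1) := Suc n))((k, la ! k - 1) := 0) = T"
    using unfilled by auto
  show "(\<lambda>T. T((k, la ! k - 1) := 0)) ` {T \<in> syt la. T (k, la ! k - 1) = Suc n} \<subseteq> syt (remove_box k la)"
    using syt_remove_corner[OF la k rem] by auto
  show "(\<lambda>T. T((k, la ! k - 1) := Suc n)) ` syt (remove_box k la) \<subseteq> {T \<in> syt la. T (k, la ! k - 1) = Suc n}"
    using syt_add_corner[OF la k rem] by auto
qed

lemma card_syt_branching:
  assumes la: "la \<in> padded_partitions N (Suc n)"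
  shows "card (syt la)
       = (\<Sum>k\<in>{k. k < N \<and> remove_box k la \<in> padded_partitions N n}. card (syt (remove_box k la)))"
proof -
  define K where "K = {k. k < N \<and> remove_box k la \<in> padded_partitions N n}"
  define S where "S k = {T \<in> syt la. T (k, la ! k - 1) = Suc n}" for k
  have cover: "syt la = (\<Union>k\<in>K. S k)"
    using syt_max_entry_in_removable_corner[OF la] by (auto simp: K_def S_def)
  have disjoint: "S k \<inter> S k' = {}" if "k \<in> K" "k' \<in> K" "k \<noteq> k'" for k k'
  proof -
    have cells: "(k, la ! k - 1) \<in> young_cells la" "(k', la ! k' - 1) \<in> young_cells la"
      using that removable_corner(1)[OF la] la
      by (auto simp: K_def young_cells_def padded_partitions_def)
    show ?thesis
    proof (rule ccontr)
      assume "S k \<inter> S k' \<noteq> {}"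
      then obtain T where T: "T \<in> syt la" "T (k, la ! k - 1) = Suc n" "T (k', la ! k' - 1) = Suc n"
        by (auto simp: S_def)
      have "inj_on T (young_cells la)" using sytD(1)[OF T(1)] by (simp add: bij_betw_def)
      hence "(k, la ! k - 1) = (k', la ! k' - 1)" using T(2,3) cells by (metis inj_onD)
      thus False using \<open>k \<noteq> k'\<close> by simp
    qed
  qed
  have card_S: "card (S k) = card (syt (remove_box k la))" if "k \<in> K" for k
    using that bij_betw_syt_remove_corner[OF la] by (auto simp: K_def S_def intro: bij_betw_same_card)
  have "card (syt la) = (\<Sum>k\<in>K. card (S k))"
    unfolding cover
    by (rule card_UN_disjoint) (use disjoint in \<open>auto simp: K_def S_def intro: finite_subset[OF _ finite_syt]\<close>)
  also have "\<dots> = (\<Sum>k\<in>K. card (syt (remove_box k la)))" by (rule sum.cong) (auto simp: card_S)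
  finally show ?thesis by (simp add: K_def)
qed

lemma card_syt_replicate_0: "card (syt (replicate N 0)) = 1"
proof -
  have yc: "young_cells (replicate N 0) = {}" by (auto simp: young_cells_def)
  have "syt (replicate N 0) = {\<lambda>_. 0}"
    by (auto simp: syt_def yc bij_betw_def)
  thus ?thesis by simp
qed

section \<open>Summing Jacobi--Trudi determinants against standard tableaux\<close>

text \<open>\<open>shifted_parts (length lam) lam\<close> is \<open>degree_seq lam\<close> read as a function, and \<open>jt_schur h lam\<close>
  is the Jacobi--Trudi determinant \<open>det (h (\<lambda>\<^sub>i - i + j))\<close> with its rows in reverse order, that is,
  the Schur function \<open>s\<^sub>\<lambda>\<close> evaluated at the complete symmetric functions \<open>h\<close>.\<close>
definition shifted_parts :: "nat \<Rightarrow> nat list \<Rightarrow> nat \<Rightarrow> nat" where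
  "shifted_parts N lam i = lam ! (N - 1 - i) + i"

definition jt_schur :: "(nat \<Rightarrow> 'a::comm_ring_1) \<Rightarrow> nat list \<Rightarrow> 'a" where
  "jt_schur h lam = jt_det h (length lam) (shifted_parts (length lam) lam)"

lemma shifted_parts_strict_mono:
  assumes "sorted_wrt (\<ge>) lam" "length lam = r" "i < k" "k < r"
  shows "shifted_parts r lam i < shifted_parts r lam k"
proof -
  have "lam ! (r - 1 - i) \<le> lam ! (r - 1 - k)"
    using assms by (intro sorted_wrt_ge_nth) auto
  thus ?thesis using assms(3) by (simp add: shifted_parts_def)
qed

lemma shifted_parts_add_box:
  assumes "length lam = N" "k < N" "i < N"
  shows "shifted_parts N (add_box k lam) i = ((shifted_parts N lam)(N - 1 - k := Suc (shifted_parts N lam (N - 1 - k)))) i"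
  using assms by (auto simp: shifted_parts_def add_box_def nth_list_update)

lemma jt_schur_add_box_not_partition:
  assumes mu: "mu \<in> padded_partitions N n" and k: "k < N" and na: "add_box k mu \<notin> padded_partitions N (Suc n)"
  shows "jt_schur h (add_box k mu) = 0"
proof -
  have len: "length mu = N" using mu by (simp add: padded_partitions_def)
  have kk: "0 < k" "mu ! (k - 1) = mu ! k" using add_box_not_in_padded_partitions[OF mu k na] by auto
  have "jt_det h N (shifted_parts N (add_box k mu)) = 0"
  proof (rule jt_det_eq_rows[of "N - 1 - k" N "N - k"])
    show "shifted_parts N (add_box k mu) (N - 1 - k) = shifted_parts N (add_box k mu) (N - k)"
      using kk k len by (auto simp: shifted_parts_def add_box_def nth_list_update)
  qed (use kk k in auto)
  thus ?thesis using len by (simp add: jt_schur_def add_box_def)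
qed

lemma jt_schur_pieri:
  assumes h0: "h 0 = 1" and mu: "mu \<in> padded_partitions N n" and nN: "n < N"
  shows "h 1 * jt_schur h mu = (\<Sum>k<N. jt_schur h (add_box k mu))"
proof -
  have len: "length mu = N" using mu by (simp add: padded_partitions_def)
  have b0: "shifted_parts N mu 0 = 0" using padded_partitions_last_zero[OF mu nN] by (simp add: shifted_parts_def)
  have "h 1 * jt_schur h mu = (\<Sum>t=0..<N. jt_det h N ((shifted_parts N mu)(t := Suc (shifted_parts N mu t))))"
    unfolding jt_schur_def len by (rule jt_det_pieri[of h "shifted_parts N mu" N, OF h0 b0]) (use nN in simp)
  also have "\<dots> = (\<Sum>t<N. jt_det h N ((shifted_parts N mu)(t := Suc (shifted_parts N mu t))))"
    by (simp add: atLeast0LessThan)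
  also have "\<dots> = (\<Sum>k<N. jt_det h N ((shifted_parts N mu)(N - Suc k := Suc (shifted_parts N mu (N - Suc k)))))"
    by (rule sum.nat_diff_reindex[symmetric])
  also have "\<dots> = (\<Sum>k<N. jt_schur h (add_box k mu))"
  proof (rule sum.cong[OF refl])
    fix k assume k: "k \<in> {..<N}"
    have "jt_det h N ((shifted_parts N mu)(N - Suc k := Suc (shifted_parts N mu (N - Suc k)))) = jt_det h N (shifted_parts N (add_box k mu))"
      by (rule jt_det_cong) (use shifted_parts_add_box[OF len, of k] k in auto)
    thus "jt_det h N ((shifted_parts N mu)(N - Suc k := Suc (shifted_parts N mu (N - Suc k)))) = jt_schur h (add_box k mu)"
      using len by (simp add: jt_schur_def add_box_def)
  qed
  finally show ?thesis .
qed

lemma bij_betw_add_box: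
  assumes k: "k < N"
  shows "bij_betw (add_box k)
           {mu \<in> padded_partitions N n. add_box k mu \<in> padded_partitions N (Suc n)}
           {la \<in> padded_partitions N (Suc n). remove_box k la \<in> padded_partitions N n}"
proof (rule bij_betw_byWitness[where f' = "remove_box k"])
  have inverse: "add_box k (remove_box k la) = la"
    if "la \<in> padded_partitions N (Suc n)" "remove_box k la \<in> padded_partitions N n" for la
    using remove_box_in_padded_partitions_pos[OF that(1) k that(2)] that(1) k
    by (intro add_box_remove_box) (auto simp: padded_partitions_def)
  show "\<forall>mu\<in>{mu \<in> padded_partitions N n. add_box k mu \<in> padded_partitions N (Suc n)}.
          remove_box k (add_box k mu) = mu"
    using k by (auto simp: padded_partitions_def)
  show "\<forall>la\<in>{la \<in> padded_partitions N (Suc n). remove_box k la \<in> padded_partitions N n}.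
          add_box k (remove_box k la) = la"
    using inverse by blast
  show "add_box k ` {mu \<in> padded_partitions N n. add_box k mu \<in> padded_partitions N (Suc n)}
        \<subseteq> {la \<in> padded_partitions N (Suc n). remove_box k la \<in> padded_partitions N n}"
    using k by (auto simp: padded_partitions_def)
  show "remove_box k ` {la \<in> padded_partitions N (Suc n). remove_box k la \<in> padded_partitions N n}
        \<subseteq> {mu \<in> padded_partitions N n. add_box k mu \<in> padded_partitions N (Suc n)}"
    using inverse by auto
qed

lemma sum_add_box_eq_sum_remove_box:
  assumes k: "k < N"
  shows "(\<Sum>mu\<in>padded_partitions N n.
            if add_box k mu \<in> padded_partitions N (Suc n) then g mu (add_box k mu) else 0)
       = (\<Sum>la\<in>padded_partitions N (Suc n).
            if remove_box k la \<in> padded_partitions N n then g (remove_box k la) la else 0)"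
proof -
  have "(\<Sum>mu\<in>padded_partitions N n.
            if add_box k mu \<in> padded_partitions N (Suc n) then g mu (add_box k mu) else 0)
      = (\<Sum>mu | mu \<in> padded_partitions N n \<and> add_box k mu \<in> padded_partitions N (Suc n).
            g mu (add_box k mu))"
    by (simp add: sum.inter_filter[OF finite_padded_partitions])
  also have "\<dots> = (\<Sum>mu | mu \<in> padded_partitions N n \<and> add_box k mu \<in> padded_partitions N (Suc n).
            g (remove_box k (add_box k mu)) (add_box k mu))"
    by (rule sum.cong) (use k in \<open>auto simp: padded_partitions_def\<close>)
  also have "\<dots> = (\<Sum>la | la \<in> padded_partitions N (Suc n) \<and> remove_box k la \<in> padded_partitions N n.
            g (remove_box k la) la)"
    using sum.reindex_bij_betw[OF bij_betw_add_box[OF k, of n]] by simp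
  also have "\<dots> = (\<Sum>la\<in>padded_partitions N (Suc n).
            if remove_box k la \<in> padded_partitions N n then g (remove_box k la) la else 0)"
    by (simp add: sum.inter_filter[OF finite_padded_partitions])
  finally show ?thesis .
qed

lemma sum_card_syt_jt_schur:
  fixes h :: "nat \<Rightarrow> 'a::comm_ring_1"
  assumes h0: "h 0 = 1" and "n \<le> N"
  shows "(\<Sum>la\<in>padded_partitions N n. of_nat (card (syt la)) * jt_schur h la) = h 1 ^ n"
  using \<open>n \<le> N\<close>
proof (induction n)
  case 0
  have "jt_det h N (shifted_parts N (replicate N 0)) = jt_det h N (\<lambda>i. i)"
    by (rule jt_det_cong) (simp add: shifted_parts_def)
  thus ?case using jt_det_identity[of h N, OF h0] by (simp add: jt_schur_def padded_partitions_0 card_syt_replicate_0)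
next
  case (Suc n)
  hence nN: "n < N" by simp
  let ?F = "\<lambda>la. (of_nat (card (syt la)) :: 'a)"
  let ?P = "padded_partitions N"
  have "h 1 ^ Suc n = h 1 * (\<Sum>mu\<in>?P n. ?F mu * jt_schur h mu)" using Suc by simp
  also have "\<dots> = (\<Sum>mu\<in>?P n. ?F mu * (h 1 * jt_schur h mu))"
    by (simp add: sum_distrib_left algebra_simps)
  also have "\<dots> = (\<Sum>mu\<in>?P n. \<Sum>k<N. if add_box k mu \<in> ?P (Suc n) then ?F mu * jt_schur h (add_box k mu) else 0)"
  proof (rule sum.cong[OF refl])
    fix mu assume mu: "mu \<in> ?P n"
    show "?F mu * (h 1 * jt_schur h mu)
        = (\<Sum>k<N. if add_box k mu \<in> ?P (Suc n) then ?F mu * jt_schur h (add_box k mu) else 0)"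
      unfolding jt_schur_pieri[of h, OF h0 mu nN] sum_distrib_left
      by (rule sum.cong) (use jt_schur_add_box_not_partition[OF mu, where h=h] in auto)
  qed
  also have "\<dots> = (\<Sum>k<N. \<Sum>la\<in>?P (Suc n). if remove_box k la \<in> ?P n then ?F (remove_box k la) * jt_schur h la else 0)"
    by (subst sum.swap, intro sum.cong refl sum_add_box_eq_sum_remove_box[where g = "\<lambda>mu la. ?F mu * jt_schur h la"]) simp
  also have "\<dots> = (\<Sum>la\<in>?P (Suc n). \<Sum>k<N. if remove_box k la \<in> ?P n then ?F (remove_box k la) * jt_schur h la else 0)"
    by (rule sum.swap)
  also have "\<dots> = (\<Sum>la\<in>?P (Suc n). ?F la * jt_schur h la)"
  proof (rule sum.cong[OF refl])
    fix la assume la: "la \<in> ?P (Suc n)"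
    have "(\<Sum>k<N. if remove_box k la \<in> ?P n then ?F (remove_box k la) * jt_schur h la else 0)
        = (\<Sum>k\<in>{k \<in> {..<N}. remove_box k la \<in> ?P n}. ?F (remove_box k la)) * jt_schur h la"
      unfolding sum_distrib_right by (rule sum.inter_filter[symmetric]) simp
    also have "{k \<in> {..<N}. remove_box k la \<in> ?P n} = {k. k < N \<and> remove_box k la \<in> ?P n}" by auto
    finally show "(\<Sum>k<N. if remove_box k la \<in> ?P n then ?F (remove_box k la) * jt_schur h la else 0)
        = ?F la * jt_schur h la"
      by (simp add: card_syt_branching[OF la])
  qed
  finally show ?case by simp
qed

section \<open>Frobenius' formula\<close>

definition inv_fact :: "nat \<Rightarrow> 'a::field_char_0" where
  "inv_fact k = 1 / fact k"

lemma inv_fact_0[simp]: "inv_fact 0 = 1" by (simp add: inv_fact_def)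

lemma jt_entry_inv_fact_step:
  "(of_nat m - of_nat j) * jt_entry (inv_fact :: nat \<Rightarrow> 'a::field_char_0) m j = (if m = 0 then 0 else jt_entry inv_fact (m - 1) j)"
proof (cases "m = 0")
  case True thus ?thesis by (simp add: jt_entry_def)
next
  case False
  show ?thesis
  proof (cases "j < m")
    case True
    obtain d where d: "m - j = Suc d" using True by (cases "m - j") auto
    have "(of_nat m - of_nat j) * jt_entry (inv_fact :: nat \<Rightarrow> 'a) m j = of_nat (Suc d) / fact (Suc d)"
      using True d by (simp add: jt_entry_def inv_fact_def of_nat_diff[symmetric])
    also have "\<dots> = 1 / fact d" by (simp add: fact_Suc field_simps del: of_nat_Suc)
    also have "\<dots> = jt_entry inv_fact (m - 1) j"
    proof -
      have md: "m - Suc j = d" using d by simp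
      have "j \<le> m - 1" using True by simp
      thus ?thesis by (simp add: jt_entry_def inv_fact_def md)
    qed
    finally show ?thesis using False by simp
  next
    case False
    thus ?thesis using \<open>m \<noteq> 0\<close> by (auto simp: jt_entry_def)
  qed
qed

text \<open>The factor \<open>b\<^sub>i - j\<close> turns the entry \<open>1 / (b\<^sub>i - j)!\<close> into \<open>1 / (b\<^sub>i - 1 - j)!\<close>, so scaling
  one row at a time by it lowers one \<open>b\<^sub>i\<close> at a time.\<close>
lemma jt_det_inv_fact_recurrence:
  "(of_nat (\<Sum>i<N. b i) - of_nat (\<Sum>j<N. j)) * jt_det (inv_fact :: nat \<Rightarrow> 'a::field_char_0) N b
   = (\<Sum>t<N. if b t = 0 then 0 else jt_det inv_fact N (b(t := b t - 1)))"
proof -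
  have "(of_nat (\<Sum>i<N. b i) - of_nat (\<Sum>j<N. j)) * jt_det (inv_fact :: nat \<Rightarrow> 'a) N b
      = ((\<Sum>i=0..<N. of_nat (b i)) - (\<Sum>j=0..<N. of_nat j)) * det (mat N N (\<lambda>(i,j). jt_entry inv_fact (b i) j))"
    by (simp add: jt_det_def atLeast0LessThan)
  also have "\<dots> = (\<Sum>t=0..<N. det (mat N N (\<lambda>(i,j). if i = t then (of_nat (b i) - of_nat j) * jt_entry inv_fact (b i) j else jt_entry inv_fact (b i) j)))"
    using sum_det_scale_row_by_difference[of N "\<lambda>i. of_nat (b i)" "\<lambda>j. of_nat j" "\<lambda>(i,j). jt_entry (inv_fact :: nat \<Rightarrow> 'a) (b i) j", symmetric]
    by (simp only: case_prod_conv)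
  also have "\<dots> = (\<Sum>t=0..<N. if b t = 0 then 0 else jt_det inv_fact N (b(t := b t - 1)))"
  proof (rule sum.cong[OF refl])
    fix t assume t: "t \<in> {0..<N}"
    have eq: "mat N N (\<lambda>(i,j). if i = t then (of_nat (b i) - of_nat j) * jt_entry (inv_fact :: nat \<Rightarrow> 'a) (b i) j else jt_entry inv_fact (b i) j)
        = mat N N (\<lambda>(i,j). if i = t then (if b t = 0 then 0 else jt_entry inv_fact (b t - 1) j) else jt_entry inv_fact (b i) j)"
      by (rule eq_matI) (auto simp: jt_entry_inv_fact_step)
    show "det (mat N N (\<lambda>(i,j). if i = t then (of_nat (b i) - of_nat j) * jt_entry (inv_fact :: nat \<Rightarrow> 'a) (b i) j else jt_entry inv_fact (b i) j))
        = (if b t = 0 then 0 else jt_det inv_fact N (b(t := b t - 1)))"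
    proof (cases "b t = 0")
      case True
      show ?thesis unfolding eq using True t
        by (simp, intro det_mat_zero_row[of t N]) auto
    next
      case False
      have "mat N N (\<lambda>(i,j). if i = t then (if b t = 0 then 0 else jt_entry (inv_fact :: nat \<Rightarrow> 'a) (b t - 1) j) else jt_entry inv_fact (b i) j)
          = mat N N (\<lambda>(i,j). jt_entry inv_fact ((b(t := b t - 1)) i) j)"
        using False by (intro eq_matI) auto
      thus ?thesis unfolding eq jt_det_def using False by simp
    qed
  qed
  finally show ?thesis by (simp add: atLeast0LessThan)
qed

lemma sum_shifted_parts:
  assumes "length la = N"
  shows "(\<Sum>i<N. shifted_parts N la i) = sum_list la + (\<Sum>j<N. j)"
proof -
  have "(\<Sum>i<N. shifted_parts N la i) = (\<Sum>i<N. la ! (N - Suc i)) + (\<Sum>j<N. j)"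
    by (simp add: shifted_parts_def sum.distrib)
  also have "(\<Sum>i<N. la ! (N - Suc i)) = (\<Sum>i<N. la ! i)" by (rule sum.nat_diff_reindex)
  also have "\<dots> = sum_list la" using assms by (simp add: sum_list_sum_nth atLeast0LessThan)
  finally show ?thesis .
qed

lemma jt_det_inv_fact_remove_box:
  assumes la: "la \<in> padded_partitions N (Suc n)" and k: "k < N"
  shows "(if shifted_parts N la (N - Suc k) = 0 then 0 else jt_det (inv_fact :: nat \<Rightarrow> 'a::field_char_0) N ((shifted_parts N la)(N - Suc k := shifted_parts N la (N - Suc k) - 1)))
       = (if remove_box k la \<in> padded_partitions N n then jt_det inv_fact N (shifted_parts N (remove_box k la)) else 0)"
proof -
  let ?b = "shifted_parts N la" and ?t = "N - Suc k"
  have len: "length la = N" using la by (simp add: padded_partitions_def)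
  have tk: "N - 1 - ?t = k" using k by simp
  show ?thesis
  proof (cases "0 < la ! k")
    case True
    hence bt: "?b ?t \<noteq> 0" using tk by (simp add: shifted_parts_def)
    have agree: "jt_det (inv_fact :: nat \<Rightarrow> 'a) N (?b(?t := ?b ?t - 1)) = jt_det inv_fact N (shifted_parts N (remove_box k la))"
      by (rule jt_det_cong) (use k len tk True in \<open>auto simp: shifted_parts_def remove_box_def nth_list_update\<close>)
    show ?thesis
    proof (cases "remove_box k la \<in> padded_partitions N n")
      case True thus ?thesis using bt agree by simp
    next
      case False
      have sk: "Suc k < N" "la ! Suc k = la ! k"
        using remove_box_not_in_padded_partitions[OF la k \<open>0 < la ! k\<close>] False by auto
      have "jt_det (inv_fact :: nat \<Rightarrow> 'a) N (?b(?t := ?b ?t - 1)) = 0"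
        by (rule jt_det_eq_rows[of ?t N "?t - 1"]) (use sk k True in \<open>auto simp: shifted_parts_def Suc_diff_Suc\<close>)
      thus ?thesis using False bt by simp
    qed
  next
    case False
    hence z: "la ! k = 0" by simp
    hence "remove_box k la = la" by (simp add: remove_box_def) (metis list_update_id)
    hence ns: "remove_box k la \<notin> padded_partitions N n" using la by (auto simp: padded_partitions_def)
    have "jt_det (inv_fact :: nat \<Rightarrow> 'a) N (?b(?t := ?b ?t - 1)) = 0" if bt: "?b ?t \<noteq> 0"
    proof -
      have t1: "1 \<le> ?t" using bt z tk by (simp add: shifted_parts_def)
      hence sk: "Suc k < N" by simp
      have "la ! Suc k \<le> la ! k" using la sk by (intro sorted_wrt_ge_nth) (auto simp: padded_partitions_def)
      hence z2: "la ! Suc k = 0" using z by simp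
      show ?thesis
        by (rule jt_det_eq_rows[of ?t N "?t - 1"]) (use sk k z z2 t1 in \<open>auto simp: shifted_parts_def Suc_diff_Suc\<close>)
    qed
    thus ?thesis using ns by auto
  qed
qed

text \<open>Both sides obey the branching rule: removing the corner in row \<open>k\<close> lowers one shifted part,
  and the recurrence above sums exactly these terms, the others vanishing by repeated rows.\<close>
lemma card_syt_eq_fact_jt_det:
  "la \<in> padded_partitions N n \<Longrightarrow> (of_nat (card (syt la)) :: 'a::field_char_0) = fact n * jt_det inv_fact N (shifted_parts N la)"
proof (induction n arbitrary: la)
  case 0
  hence la: "la = replicate N 0" by (simp add: padded_partitions_0)
  have "jt_det (inv_fact :: nat \<Rightarrow> 'a) N (shifted_parts N la) = jt_det inv_fact N (\<lambda>i. i)"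
    by (rule jt_det_cong) (simp add: shifted_parts_def la)
  also have "\<dots> = 1" by (rule jt_det_identity) simp
  finally show ?case by (simp add: la card_syt_replicate_0)
next
  case (Suc n)
  note la = Suc.prems
  have len: "length la = N" and sm: "sum_list la = Suc n" using la by (auto simp: padded_partitions_def)
  let ?c = "\<lambda>mu. jt_det (inv_fact :: nat \<Rightarrow> 'a) N (shifted_parts N mu)"
  let ?K = "{k. k < N \<and> remove_box k la \<in> padded_partitions N n}"
  have "of_nat (Suc n) * ?c la = (of_nat (\<Sum>i<N. shifted_parts N la i) - of_nat (\<Sum>j<N. j)) * ?c la"
    using sum_shifted_parts[OF len] sm by simp
  also have "\<dots> = (\<Sum>t<N. if shifted_parts N la t = 0 then 0 else jt_det inv_fact N ((shifted_parts N la)(t := shifted_parts N la t - 1)))"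
    by (rule jt_det_inv_fact_recurrence)
  also have "\<dots> = (\<Sum>k<N. if shifted_parts N la (N - Suc k) = 0 then 0 else jt_det inv_fact N ((shifted_parts N la)(N - Suc k := shifted_parts N la (N - Suc k) - 1)))"
    by (rule sum.nat_diff_reindex[symmetric])
  also have "\<dots> = (\<Sum>k<N. if remove_box k la \<in> padded_partitions N n then ?c (remove_box k la) else 0)"
    by (rule sum.cong[OF refl], rule jt_det_inv_fact_remove_box[OF la]) simp
  also have "\<dots> = (\<Sum>k\<in>?K. ?c (remove_box k la))"
  proof -
    have "(\<Sum>k<N. if remove_box k la \<in> padded_partitions N n then ?c (remove_box k la) else 0) = (\<Sum>k\<in>{k \<in> {..<N}. remove_box k la \<in> padded_partitions N n}. ?c (remove_box k la))"
      by (rule sum.inter_filter[symmetric]) simp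
    also have "{k \<in> {..<N}. remove_box k la \<in> padded_partitions N n} = ?K" by auto
    finally show ?thesis .
  qed
  finally have rec: "of_nat (Suc n) * ?c la = (\<Sum>k\<in>?K. ?c (remove_box k la))" .
  have "(of_nat (card (syt la)) :: 'a) = (\<Sum>k\<in>?K. of_nat (card (syt (remove_box k la))))"
    by (simp add: card_syt_branching[OF la])
  also have "\<dots> = (\<Sum>k\<in>?K. fact n * ?c (remove_box k la))"
    by (rule sum.cong[OF refl]) (simp add: Suc.IH)
  also have "\<dots> = fact n * (\<Sum>k\<in>?K. ?c (remove_box k la))" by (simp add: sum_distrib_left)
  also have "\<dots> = fact n * (of_nat (Suc n) * ?c la)" by (simp only: rec)
  also have "\<dots> = fact (Suc n) * ?c la" by (simp add: fact_Suc algebra_simps del: of_nat_Suc)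
  finally show ?case .
qed

lemma fact_eq_falling_fact:
  "j \<le> m \<Longrightarrow> (of_nat (fact m) :: 'a::comm_ring_1) = falling_fact (of_nat m) j * of_nat (fact (m - j))"
proof (induction j)
  case 0 thus ?case by simp
next
  case (Suc j)
  hence jm: "j < m" by simp
  have e: "m - j = Suc (m - Suc j)" using jm by simp
  have f: "fact (m - j) = (m - j) * fact (m - Suc j)"
    unfolding e by (simp only: fact_Suc of_nat_id)
  have d: "(of_nat (m - j) :: 'a) = of_nat m - of_nat j" using jm by (intro of_nat_diff) simp
  have "(of_nat (fact m) :: 'a) = falling_fact (of_nat m) j * of_nat (fact (m - j))" using Suc by simp
  also have "(of_nat (fact (m - j)) :: 'a) = of_nat (m - j) * of_nat (fact (m - Suc j))"
    unfolding f by (rule of_nat_mult)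
  also have "falling_fact (of_nat m) j * (of_nat (m - j) * of_nat (fact (m - Suc j))) = falling_fact (of_nat m) (Suc j) * (of_nat (fact (m - Suc j)) :: 'a)"
    unfolding d falling_fact_Suc by (simp only: mult_ac)
  finally show ?case .
qed

lemma falling_fact_of_nat_eq_0: "m < j \<Longrightarrow> falling_fact (of_nat m :: 'a::comm_ring_1) j = 0"
  unfolding falling_fact_def by (rule prod_zero) auto

lemma jt_entry_inv_fact_eq_falling_fact: "jt_entry (inv_fact :: nat \<Rightarrow> 'a::field_char_0) m j = (1 / fact m) * falling_fact (of_nat m) j"
proof (cases "j \<le> m")
  case True
  have fm: "(fact m :: 'a) = falling_fact (of_nat m) j * fact (m - j)"
    using fact_eq_falling_fact[OF True, where 'a='a] by (simp only: of_nat_fact)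
  have nz: "falling_fact (of_nat m) j \<noteq> (0::'a)"
  proof
    assume "falling_fact (of_nat m) j = (0::'a)"
    hence "(fact m :: 'a) = 0" using fm by simp
    thus False by simp
  qed
  have "(1 / fact m) * falling_fact (of_nat m) j = falling_fact (of_nat m) j / (falling_fact (of_nat m) j * (fact (m - j) :: 'a))"
    by (subst fm) simp
  also have "\<dots> = 1 / fact (m - j)" using nz by simp
  also have "\<dots> = jt_entry inv_fact m j" using True by (simp add: jt_entry_def inv_fact_def)
  finally show ?thesis by simp
qed (simp add: jt_entry_def falling_fact_of_nat_eq_0)

lemma jt_det_inv_fact_eq_vandermonde:
  "jt_det (inv_fact :: nat \<Rightarrow> 'a::field_char_0) N b
   = (\<Prod>i=0..<N. 1 / fact (b i)) * (\<Prod>(i,k)\<in>index_pairs N. of_nat (b k) - of_nat (b i))"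
proof -
  have "jt_det (inv_fact :: nat \<Rightarrow> 'a) N b = det (mat N N (\<lambda>(i,j). (1 / fact (b i)) * falling_fact (of_nat (b i)) j))"
    unfolding jt_det_def jt_entry_inv_fact_eq_falling_fact ..
  also have "\<dots> = (\<Prod>i=0..<N. 1 / fact (b i)) * det (mat N N (\<lambda>(i,j). falling_fact (of_nat (b i) :: 'a) j))"
    using det_mat_scale_rows[of N "\<lambda>i. 1 / fact (b i)" "\<lambda>(i,j). falling_fact (of_nat (b i) :: 'a) j"]
    by (simp only: case_prod_conv)
  also have "det (mat N N (\<lambda>(i,j). falling_fact (of_nat (b i) :: 'a) j)) = (\<Prod>(i,k)\<in>index_pairs N. of_nat (b k) - of_nat (b i))"
    by (rule det_falling_fact_eq_vandermonde)
  finally show ?thesis .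
qed

lemma card_syt_frobenius:
  assumes "la \<in> padded_partitions N n"
  shows "(of_nat (card (syt la)) :: 'a::field_char_0)
       = fact n * (\<Prod>i=0..<N. 1 / fact (shifted_parts N la i))
           * (\<Prod>(i,k)\<in>index_pairs N. of_nat (shifted_parts N la k) - of_nat (shifted_parts N la i))"
  by (simp add: card_syt_eq_fact_jt_det[OF assms] jt_det_inv_fact_eq_vandermonde mult.assoc)

section \<open>Wronskians of Appell sequences\<close>

definition appell_over_fact :: "(nat \<Rightarrow> 'a::field_char_0 poly) \<Rightarrow> nat \<Rightarrow> 'a poly" where
  "appell_over_fact A k = smult (1 / fact k) (A k)"

lemma pderiv_appell_over_fact:
  assumes ap: "appell A"
  shows "pderiv (appell_over_fact A p) = (if p = 0 then 0 else appell_over_fact A (p - 1))"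
proof (cases p)
  case 0
  have "A 0 = 1" using ap by (simp add: appell_def)
  thus ?thesis using 0 by (simp add: appell_over_fact_def pderiv_smult)
next
  case (Suc q)
  have "pderiv (A p) = smult (of_nat p) (A (p - 1))" using ap Suc by (simp add: appell_def)
  hence "pderiv (appell_over_fact A p) = smult (of_nat (Suc q) / fact (Suc q)) (A q)" using Suc by (simp add: appell_over_fact_def pderiv_smult)
  also have "of_nat (Suc q) / fact (Suc q) = (1 / fact q :: 'a)"
    by (simp add: fact_Suc field_simps del: of_nat_Suc)
  finally show ?thesis using Suc by (simp add: appell_over_fact_def)
qed

lemma pderiv_jt_entry_appell_over_fact:
  assumes ap: "appell A"
  shows "pderiv (jt_entry (appell_over_fact A) m j) = jt_entry (appell_over_fact A) m (Suc j)"
  using pderiv_appell_over_fact[OF ap, of "m - j"] by (auto simp: jt_entry_def Suc_diff_Suc)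

lemma higher_pderiv_appell:
  assumes ap: "appell A"
  shows "(pderiv ^^ j) (A m) = smult (of_nat (fact m)) (jt_entry (appell_over_fact A) m j)"
proof (induction j)
  case 0 thus ?case by (simp add: jt_entry_def appell_over_fact_def)
next
  case (Suc j)
  thus ?case by (simp add: pderiv_smult pderiv_jt_entry_appell_over_fact[OF ap])
qed

lemma wronskian_appell_eq_jt_det:
  assumes ap: "appell A"
  shows "wronskian (map A ns) = smult (\<Prod>i=0..<length ns. of_nat (fact (ns ! i))) (jt_det (appell_over_fact A) (length ns) (\<lambda>i. ns ! i))"
proof -
  let ?r = "length ns"
  let ?M = "mat ?r ?r (\<lambda>(i,j). (pderiv ^^ i) (map A ns ! j))"
  have "wronskian (map A ns) = det ?M" by (simp add: wronskian_def)
  also have "\<dots> = det (transpose_mat ?M)" using det_transpose[of ?M ?r] by simp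
  also have "transpose_mat ?M = mat ?r ?r (\<lambda>(i,j). [:of_nat (fact (ns ! i)):] * jt_entry (appell_over_fact A) (ns ! i) j)"
    by (rule eq_matI) (auto simp: higher_pderiv_appell[OF ap])
  also have "det \<dots> = (\<Prod>i=0..<?r. [:of_nat (fact (ns ! i)):]) * det (mat ?r ?r (\<lambda>(i,j). jt_entry (appell_over_fact A) (ns ! i) j))"
    using det_mat_scale_rows[of ?r "\<lambda>i. [:of_nat (fact (ns ! i)):]" "\<lambda>(i,j). jt_entry (appell_over_fact A) (ns ! i) j"]
    by (simp only: case_prod_conv)
  finally have w: "wronskian (map A ns) = (\<Prod>i=0..<?r. [:of_nat (fact (ns ! i)):]) * det (mat ?r ?r (\<lambda>(i,j). jt_entry (appell_over_fact A) (ns ! i) j))" .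
  have sm: "\<And>c p. [:c:] * p = smult c (p :: 'a poly)" by simp
  show ?thesis unfolding w prod_to_poly jt_det_def sm ..
qed

lemma of_int_vandermonde:
  "(of_int (vandermonde xs) :: 'a::comm_ring_1) = (\<Prod>(i,k)\<in>index_pairs (length xs). of_nat (xs ! k) - of_nat (xs ! i))"
  unfolding vandermonde_def index_pairs_def of_int_prod by (rule prod.cong) auto

lemma wronskian_appell_eq_jt_schur:
  fixes A :: "nat \<Rightarrow> 'a::field_char_0 poly" and lam :: "nat list"
  assumes "appell A"
  defines "r \<equiv> length lam" and "b \<equiv> shifted_parts (length lam) lam"
  shows "wronskian_appell A lam
       = smult ((\<Prod>i=0..<r. fact (b i)) / (\<Prod>(i,k)\<in>index_pairs r. of_nat (b k) - of_nat (b i)))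
           (jt_schur (appell_over_fact A) lam)"
proof -
  have ds: "degree_seq lam = map b [0..<r]" by (simp add: degree_seq_def b_def shifted_parts_def r_def)
  have "wronskian (map A (degree_seq lam))
      = smult (\<Prod>i=0..<r. fact (b i)) (jt_det (appell_over_fact A) r (\<lambda>i. degree_seq lam ! i))"
    using wronskian_appell_eq_jt_det[OF assms(1), of "degree_seq lam"] by (simp add: ds of_nat_fact)
  also have "jt_det (appell_over_fact A) r (\<lambda>i. degree_seq lam ! i) = jt_schur (appell_over_fact A) lam"
    unfolding jt_schur_def r_def[symmetric] by (rule jt_det_cong) (simp add: ds b_def r_def)
  finally have "wronskian (map A (degree_seq lam)) = smult (\<Prod>i=0..<r. fact (b i)) (jt_schur (appell_over_fact A) lam)" .
  moreover have "of_int (vandermonde (degree_seq lam)) = (\<Prod>(i,k)\<in>index_pairs r. of_nat (b k) - of_nat (b i) :: 'a)"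
    unfolding of_int_vandermonde by (rule prod.cong) (auto simp: ds index_pairs_def)
  ultimately show ?thesis by (simp add: wronskian_appell_def divide_inverse mult.commute)
qed

section \<open>Padding partitions with zeros\<close>

definition pad_zeros :: "nat \<Rightarrow> nat list \<Rightarrow> nat list" where
  "pad_zeros N lam = lam @ replicate (N - length lam) 0"

lemma young_cells_append_zeros: "young_cells (lam @ replicate k 0) = young_cells lam"
  by (auto simp: young_cells_def nth_append nth_replicate split: if_splits)

lemma syt_append_zeros: "syt (lam @ replicate k 0) = syt lam"
  unfolding syt_def young_cells_append_zeros by (simp add: sum_list_replicate)

lemma jt_schur_snoc_0:
  assumes h0: "h 0 = 1"
  shows "jt_schur h (xs @ [0]) = jt_schur h xs"
proof -
  let ?N = "length xs"
  have "jt_det h (Suc ?N) (shifted_parts (Suc ?N) (xs @ [0])) = jt_det h ?N (shifted_parts ?N xs)"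
  proof (rule jt_det_drop_first[of h, OF h0])
    show "shifted_parts (Suc ?N) (xs @ [0]) 0 = 0" by (simp add: shifted_parts_def nth_append)
    fix i assume i: "i < ?N"
    show "shifted_parts (Suc ?N) (xs @ [0]) (Suc i) = Suc (shifted_parts ?N xs i)"
      using i by (simp add: shifted_parts_def nth_append)
  qed
  thus ?thesis by (simp add: jt_schur_def)
qed

lemma jt_schur_append_zeros:
  assumes h0: "h 0 = 1"
  shows "jt_schur h (lam @ replicate k 0) = jt_schur h lam"
proof (induction k)
  case (Suc k)
  have "lam @ replicate (Suc k) 0 = (lam @ replicate k 0) @ [0]" by (simp add: replicate_append_same[symmetric])
  thus ?case using Suc jt_schur_snoc_0[of h, OF h0, of "lam @ replicate k 0"] by simp
qed simp

lemma length_le_sum_list_pos: "\<forall>x\<in>set xs. 0 < x \<Longrightarrow> length xs \<le> sum_list (xs :: nat list)"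
  by (induction xs) auto

lemma sum_list_filter_pos: "sum_list (filter (\<lambda>x. 0 < x) xs) = sum_list (xs :: nat list)"
  by (induction xs) auto

lemma sorted_ge_eq_filter_pos_append_zeros:
  "sorted_wrt (\<ge>) (xs :: nat list) \<Longrightarrow>
   xs = filter (\<lambda>x. 0 < x) xs @ replicate (length xs - length (filter (\<lambda>x. 0 < x) xs)) 0"
proof (induction xs)
  case (Cons x xs)
  show ?case
  proof (cases "0 < x")
    case True
    have "length (filter (\<lambda>x. 0 < x) xs) \<le> length xs" by simp
    thus ?thesis using Cons True by (simp add: Suc_diff_le)
  next
    case False
    hence "\<forall>y\<in>set xs. y = 0" using Cons.prems by auto
    hence "filter (\<lambda>x. 0 < x) xs = []" "xs = replicate (length xs) 0"
      by (auto simp: filter_empty_conv intro: replicate_length_same[symmetric])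
    thus ?thesis using False by simp
  qed
qed simp

lemma bij_betw_pad_zeros:
  assumes nN: "n \<le> N"
  shows "bij_betw (pad_zeros N) (partitions n) (padded_partitions N n)"
proof (rule bij_betw_byWitness[where f' = "filter (\<lambda>x. 0 < x)"])
  show "\<forall>lam\<in>partitions n. filter (\<lambda>x. 0 < x) (pad_zeros N lam) = lam"
  proof
    fix lam assume "lam \<in> partitions n"
    hence pos: "\<forall>x\<in>set lam. 0 < x" by (simp add: partitions_def is_partition_def)
    hence "filter (\<lambda>x. 0 < x) lam = lam" by (simp add: filter_id_conv)
    thus "filter (\<lambda>x. 0 < x) (pad_zeros N lam) = lam" by (simp add: pad_zeros_def)
  qed
  show "\<forall>la\<in>padded_partitions N n. pad_zeros N (filter (\<lambda>x. 0 < x) la) = la"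
  proof
    fix la assume "la \<in> padded_partitions N n"
    hence "sorted_wrt (\<ge>) la" "length la = N" by (auto simp: padded_partitions_def)
    thus "pad_zeros N (filter (\<lambda>x. 0 < x) la) = la" using sorted_ge_eq_filter_pos_append_zeros[of la] by (simp add: pad_zeros_def)
  qed
  show "pad_zeros N ` partitions n \<subseteq> padded_partitions N n"
  proof
    fix x assume "x \<in> pad_zeros N ` partitions n"
    then obtain lam where lam: "lam \<in> partitions n" and x: "x = pad_zeros N lam" by auto
    have pos: "\<forall>x\<in>set lam. 0 < x" and s: "sorted_wrt (\<ge>) lam" and sm: "sum_list lam = n"
      using lam by (auto simp: partitions_def is_partition_def)
    have len: "length lam \<le> N" using length_le_sum_list_pos[OF pos] sm nN by simp
    have "sorted_wrt (\<ge>) (pad_zeros N lam)"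
      unfolding pad_zeros_def sorted_wrt_append using s
      by (auto simp: sorted_wrt_iff_nth_less)
    thus "x \<in> padded_partitions N n" using len sm by (simp add: x padded_partitions_def pad_zeros_def)
  qed
  show "filter (\<lambda>x. 0 < x) ` padded_partitions N n \<subseteq> partitions n"
  proof
    fix x assume "x \<in> filter (\<lambda>x. 0 < x) ` padded_partitions N n"
    then obtain la where la: "la \<in> padded_partitions N n" and x: "x = filter (\<lambda>x. 0 < x) la" by auto
    have "sorted_wrt (\<ge>) la" "sum_list la = n" using la by (auto simp: padded_partitions_def)
    thus "x \<in> partitions n"
      by (auto simp: x partitions_def is_partition_def sorted_wrt_filter sum_list_filter_pos)
  qed
qed

section \<open>The Plancherel average\<close>

text \<open>Frobenius' formula \<open>F\<^sub>\<lambda> = n! \<Delta>(n\<^sub>1, \<dots>, n\<^sub>r) / \<Prod>\<^sub>i n\<^sub>i!\<close> cancels the normalisation of the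
  Wronskian.\<close>
lemma plancherel_summand_eq:
  assumes "appell A" and lam: "lam \<in> partitions n"
  shows "smult (of_nat (num_syt lam ^ 2) / fact n) (wronskian_appell A lam)
       = smult (of_nat (num_syt lam)) (jt_schur (appell_over_fact A) lam)"
proof -
  define r where "r = length lam"
  define b where "b = shifted_parts r lam"
  define P :: 'a where "P = (\<Prod>i=0..<r. fact (b i))"
  define V :: 'a where "V = (\<Prod>(i,k)\<in>index_pairs r. of_nat (b k) - of_nat (b i))"
  have sorted: "sorted_wrt (\<ge>) lam" and "sum_list lam = n"
    using lam by (auto simp: partitions_def is_partition_def)
  hence "lam \<in> padded_partitions r n" by (simp add: padded_partitions_def r_def)
  moreover have "(\<Prod>i=0..<r. 1 / fact (b i)) = 1 / P" by (simp add: P_def prod_dividef)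
  ultimately have F: "(of_nat (num_syt lam) :: 'a) = fact n * V / P"
    unfolding num_syt_def by (simp add: card_syt_frobenius V_def b_def)
  have "P \<noteq> 0" by (simp add: P_def)
  moreover have "V \<noteq> 0"
    unfolding V_def using shifted_parts_strict_mono[OF sorted r_def[symmetric]]
    by (subst prod_zero_iff[OF finite_index_pairs]) (clarsimp simp: b_def index_pairs_def, metis less_irrefl)
  ultimately have "of_nat (num_syt lam ^ 2) / fact n * (P / V) = (of_nat (num_syt lam) :: 'a)"
    by (simp add: F power2_eq_square)
  thus ?thesis
    by (simp add: wronskian_appell_eq_jt_schur[OF assms(1)] P_def V_def b_def r_def)
qed

theorem theorem5p2:
  fixes A :: "nat \<Rightarrow> 'a::field_char_0 poly" and n :: nat
  assumes "appell A"
  shows "(\<Sum>lam\<in>partitions n.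
            smult (of_nat (num_syt lam ^ 2) / fact n) (wronskian_appell A lam))
         = A 1 ^ n"
proof -
  let ?B = "appell_over_fact A"
  have B0: "?B 0 = 1" using assms by (simp add: appell_over_fact_def appell_def)
  have "(\<Sum>lam\<in>partitions n. smult (of_nat (num_syt lam ^ 2) / fact n) (wronskian_appell A lam))
      = (\<Sum>lam\<in>partitions n. of_nat (card (syt (pad_zeros n lam))) * jt_schur ?B (pad_zeros n lam))"
  proof (rule sum.cong[OF refl])
    fix lam assume "lam \<in> partitions n"
    show "smult (of_nat (num_syt lam ^ 2) / fact n) (wronskian_appell A lam)
        = of_nat (card (syt (pad_zeros n lam))) * jt_schur ?B (pad_zeros n lam)"
      unfolding plancherel_summand_eq[OF assms \<open>lam \<in> partitions n\<close>] pad_zeros_def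
      by (simp add: syt_append_zeros num_syt_def jt_schur_append_zeros[of ?B, OF B0] of_nat_mult_conv_smult)
  qed
  also have "\<dots> = (\<Sum>la\<in>padded_partitions n n. of_nat (card (syt la)) * jt_schur ?B la)"
    by (rule sum.reindex_bij_betw[OF bij_betw_pad_zeros]) simp
  also have "\<dots> = ?B 1 ^ n" by (rule sum_card_syt_jt_schur[of ?B, OF B0]) simp
  also have "?B 1 = A 1" by (simp add: appell_over_fact_def)
  finally show ?thesis .
qed

end
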